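(* Let $\sigma>0$, $\lambda>0$, $\kappa_1\in(0,1)$ and $t_1\in(0,\sigma)$. For every $\gamma_1\ge\kappa_1/(\sigma-t_1)$, any solution $(x(t),y(t))$ on $[0,\sigma]$ of the system \[ x'=y,\qquad y'=-\lambda a^+(t)g(x) \] with $x(t_1)\le\kappa_1$ and $y(t_1)\le-\gamma_1$ satisfies $x(\sigma)\le0$ and $y(\sigma)\le-\gamma_1$.
   Context: $a\in L^1(0,\sigma)$ is a real function with positive part $a^+$. $g\colon\mathbb{R}\to[0,+\infty)$ is the extension by zero outside $[0,1]$ of a locally Lipschitz continuous function $g\colon[0,1]\to[0,+\infty)$ with $g(0)=g(1)=0$, $g(s)>0$ for $0<s<1$ and $\lim_{s\to0^+}g(s)/s=0$. Solutions are in the Carathéodory sense. *)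

theory Defs
  imports "HOL-Analysis.Analysis"
begin

definition admissible_g :: "(real \<Rightarrow> real) \<Rightarrow> bool" where
  "admissible_g g \<longleftrightarrow>
     (\<forall>s. s \<notin> {0..1} \<longrightarrow> g s = 0) \<and>
     (\<forall>s. 0 \<le> g s) \<and>
     (\<forall>u\<in>{0..1}. \<exists>r>0. \<exists>L. L-lipschitz_on ({0..1} \<inter> cball u r) g) \<and>
     g 0 = 0 \<and> g 1 = 0 \<and>
     (\<forall>s. 0 < s \<and> s < 1 \<longrightarrow> 0 < g s) \<and>
     ((\<lambda>s. g s / s) \<longlongrightarrow> 0) (at_right 0)"

text \<open>Caratheodory solution on [0,sigma] of x' = y, y' = - lambda a^+(t) g(x),
written in the equivalent integral form (x, y absolutely continuous with the
equations holding almost everywhere).\<close>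
definition cara_solution ::
  "real \<Rightarrow> real \<Rightarrow> (real \<Rightarrow> real) \<Rightarrow> (real \<Rightarrow> real) \<Rightarrow> (real \<Rightarrow> real) \<Rightarrow> (real \<Rightarrow> real) \<Rightarrow> bool"
where
  "cara_solution \<sigma> lam a g x y \<longleftrightarrow>
     continuous_on {0..\<sigma>} x \<and> continuous_on {0..\<sigma>} y \<and>
     set_integrable lborel {0..\<sigma>} (\<lambda>s. max 0 (a s) * g (x s)) \<and>
     (\<forall>t\<in>{0..\<sigma>}. x t = x 0 + (LBINT s=0..t. y s)) \<and>
     (\<forall>t\<in>{0..\<sigma>}. y t = y 0 - lam * (LBINT s=0..t. max 0 (a s) * g (x s)))"

end

theory Submission
  imports Defs
begin

text \<open>Since g \<ge> 0 and lam > 0, the velocity y is nonincreasing, so after t_1 it stays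
  below -\<gamma>_1. Integrating x' = y over [t_1, \<sigma>] then gives
  x(\<sigma>) \<le> \<kappa>_1 - \<gamma>_1 (\<sigma> - t_1) \<le> 0.\<close>

lemma interval_integral_sum_Icc:
  fixes f :: "real \<Rightarrow> 'a::{banach, second_countable_topology}"
  assumes "set_integrable lborel {a..c} f" "a \<le> b" "b \<le> c"
  shows "(LBINT s=a..b. f s) + (LBINT s=b..c. f s) = (LBINT s=a..c. f s)"
proof -
  have "set_integrable lborel (einterval a c) f"
    by (rule set_integrable_subset[OF assms(1)]) (auto simp: einterval_iff)
  then have "interval_lebesgue_integrable lborel a c f"
    using assms(2,3) by (simp add: interval_lebesgue_integrable_def)
  then show ?thesis
    using interval_integral_sum[of a b c f] assms(2,3) by (simp add: min_def max_def)
qed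

lemma interval_integral_nonneg_Icc:
  fixes f :: "real \<Rightarrow> real"
  assumes "a \<le> b" "\<And>s. s \<in> {a..b} \<Longrightarrow> 0 \<le> f s"
  shows "0 \<le> (LBINT s=a..b. f s)"
proof -
  have "0 \<le> (LBINT s:{a..b}. f s)"
    unfolding set_lebesgue_integral_def
    by (rule integral_nonneg_AE) (auto simp: assms(2) indicator_def)
  with assms(1) show ?thesis by (simp add: interval_integral_Icc)
qed

lemma interval_integral_le_const:
  fixes f :: "real \<Rightarrow> real"
  assumes "set_integrable lborel {a..b} f" "a \<le> b" "\<And>s. s \<in> {a..b} \<Longrightarrow> f s \<le> c"
  shows "(LBINT s=a..b. f s) \<le> c * (b - a)"
proof -
  have "(LBINT s:{a..b}. f s) \<le> (LBINT s:{a..b}. c)"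
    by (rule set_integral_mono[OF assms(1) borel_integrable_atLeastAtMost' assms(3)]) simp_all
  also have "\<dots> = c * (b - a)"
    using assms(2) by (metis interval_integral_Icc interval_integral_const(2))
  finally show ?thesis
    using assms(2) by (simp add: interval_integral_Icc)
qed

lemma cara_solution_x_increment:
  assumes "cara_solution \<sigma> lam a g x y" "0 \<le> s" "s \<le> t" "t \<le> \<sigma>"
  shows "x t = x s + (LBINT u=s..t. y u)"
proof -
  have "continuous_on {0..\<sigma>} y"
    using assms(1) by (simp add: cara_solution_def)
  then have "continuous_on {0..t} y"
    by (rule continuous_on_subset) (use assms(4) in auto)
  then have "(LBINT u=0..s. y u) + (LBINT u=s..t. y u) = (LBINT u=0..t. y u)"
    using interval_integral_sum_Icc[OF borel_integrable_atLeastAtMost' assms(2,3)]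
    by (simp add: zero_ereal_def)
  moreover have "x r = x 0 + (LBINT u=0..r. y u)" if "r \<in> {0..\<sigma>}" for r
    using assms(1) that unfolding cara_solution_def by blast
  ultimately show ?thesis
    using assms(2-4) by (smt (verit) atLeastAtMost_iff)
qed

lemma cara_solution_y_antitone:
  assumes "cara_solution \<sigma> lam a g x y" "0 \<le> lam" "\<And>u. 0 \<le> g u"
    and "0 \<le> s" "s \<le> t" "t \<le> \<sigma>"
  shows "y t \<le> y s"
proof -
  define h where "h u = max 0 (a u) * g (x u)" for u
  have "set_integrable lborel {0..\<sigma>} h"
    using assms(1) unfolding cara_solution_def h_def by simp
  then have "set_integrable lborel {0..t} h"
    by (rule set_integrable_subset) (use assms(6) in auto)
  then have "(LBINT u=0..s. h u) + (LBINT u=s..t. h u) = (LBINT u=0..t. h u)"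
    using interval_integral_sum_Icc[OF _ assms(4,5)] by (simp add: zero_ereal_def)
  moreover have "0 \<le> (LBINT u=s..t. h u)"
    using assms(3,5) by (intro interval_integral_nonneg_Icc) (simp_all add: h_def)
  ultimately have "lam * (LBINT u=0..s. h u) \<le> lam * (LBINT u=0..t. h u)"
    using assms(2) by (intro mult_left_mono) linarith+
  moreover have "y r = y 0 - lam * (LBINT u=0..r. h u)" if "r \<in> {0..\<sigma>}" for r
    using assms(1) that unfolding cara_solution_def h_def by blast
  ultimately show ?thesis
    using assms(4-6) by (smt (verit) atLeastAtMost_iff)
qed

theorem lemma2p1:
  fixes \<sigma> lam \<kappa>\<^sub>1 t\<^sub>1 \<gamma>\<^sub>1 :: real and a g x y :: "real \<Rightarrow> real"
  assumes "\<sigma> > 0" and "lam > 0" and "0 < \<kappa>\<^sub>1" and "\<kappa>\<^sub>1 < 1"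
    and "0 < t\<^sub>1" and "t\<^sub>1 < \<sigma>"
    and "set_integrable lborel {0..\<sigma>} a"
    and "admissible_g g"
    and "\<gamma>\<^sub>1 \<ge> \<kappa>\<^sub>1 / (\<sigma> - t\<^sub>1)"
    and "cara_solution \<sigma> lam a g x y"
    and "x t\<^sub>1 \<le> \<kappa>\<^sub>1" and "y t\<^sub>1 \<le> - \<gamma>\<^sub>1"
  shows "x \<sigma> \<le> 0 \<and> y \<sigma> \<le> - \<gamma>\<^sub>1"
proof -
  have g_nonneg: "\<And>u. 0 \<le> g u"
    using assms(8) unfolding admissible_g_def by blast
  have y_below: "y t \<le> - \<gamma>\<^sub>1" if "t \<in> {t\<^sub>1..\<sigma>}" for t
  proof -
    have "y t \<le> y t\<^sub>1"
      using that assms(2,5) by (intro cara_solution_y_antitone[OF assms(10) _ g_nonneg]) simp_all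
    with assms(12) show ?thesis by linarith
  qed
  have "continuous_on {0..\<sigma>} y"
    using assms(10) by (simp add: cara_solution_def)
  then have "continuous_on {t\<^sub>1..\<sigma>} y"
    by (rule continuous_on_subset) (use assms(5) in auto)
  then have "(LBINT u=t\<^sub>1..\<sigma>. y u) \<le> - \<gamma>\<^sub>1 * (\<sigma> - t\<^sub>1)"
    using assms(6) y_below
    by (intro interval_integral_le_const borel_integrable_atLeastAtMost') simp_all
  moreover have "x \<sigma> = x t\<^sub>1 + (LBINT u=t\<^sub>1..\<sigma>. y u)"
    using assms(5,6) by (intro cara_solution_x_increment[OF assms(10)]) simp_all
  moreover have "\<kappa>\<^sub>1 \<le> \<gamma>\<^sub>1 * (\<sigma> - t\<^sub>1)"
    using assms(6,9) by (simp add: divide_le_eq)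
  moreover have "y \<sigma> \<le> - \<gamma>\<^sub>1"
    using assms(6) by (intro y_below) simp
  ultimately show ?thesis
    using assms(11) by linarith
qed

end
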